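(* Let $f(\mathbf{x})=f_0+\sum_{\alpha\in U^n_{2d}}f_\alpha\mathbf{x}^\alpha$ be a real polynomial of degree $2d$ in $\mathbf{x}\in\mathbb{R}^n$, where $U^n_{2d}=\{\alpha\in\mathbb{N}^n:0<|\alpha|\le2d\}$. Let $[\mathbf{x}]_d\in\mathbb{R}^{N}$, $N=\binom{n+d}{d}$, be the vector of all monomials of degree at most $d$ (in a fixed order, first entry $1$), and suppose $N=mp$ with integers $m\ge1$, $p\ne1$; set $[\mathcal{X}]_d=\mathrm{fold}([\mathbf{x}]_d)\in\mathbb{R}^{m\times1\times p}$. Define $\gamma_{sdp}=\sup\{\gamma\in\mathbb{R}:\exists\,X\in\mathbb{R}^{N\times N}\text{ symmetric PSD with } f(\mathbf{x})-\gamma=X\bullet([\mathbf{x}]_d[\mathbf{x}]_d^\top)\ \forall\mathbf{x}\in\mathbb{R}^n\}$ (the SDP relaxation) and $\gamma_{tsdp}=\sup\{\gamma\in\mathbb{R}:\exists\,\mathcal{X}\in S\mathbb{R}^{m\times m\times p}_+\text{ with } f(\mathbf{x})-\gamma=\langle\mathcal{X},[\mathcal{X}]_d*[\mathcal{X}]_d^\top\rangle\ \forall\mathbf{x}\in\mathbb{R}^n\}$ (the TSDP relaxation), and put $f^{uc}_{sdp}=f_0-\gamma_{sdp}$, $f^{uc}_{tsdp}=f_0-\gamma_{tsdp}$. Assume both suprema are finite and attained. Then $f^{uc}_{sdp}\le f^{uc}_{tsdp}$, and $f^{uc}_{sdp}=f^{uc}_{tsdp}$ if and only if there exists an optimal matrix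 $X^*$ of the SDP relaxation (a symmetric PSD $X^*$ with $f(\mathbf{x})-\gamma_{sdp}=X^*\bullet([\mathbf{x}]_d[\mathbf{x}]_d^\top)$ for all $\mathbf{x}$) which is $p$-block circulant, i.e. $X^*=\mathrm{bcirc}(\mathcal{Y})$ for some $\mathcal{Y}\in\mathbb{R}^{m\times m\times p}$.
   Context: For $\mathcal{A}\in\mathbb{R}^{m\times n\times p}$ let $A^{(k)}\in\mathbb{R}^{m\times n}$ ($k\in[p]$) be its frontal slices, $(A^{(k)})_{ij}=a_{ijk}$. $\mathrm{bcirc}(\mathcal{A})\in\mathbb{R}^{mp\times np}$ is the block circulant matrix whose $(i,j)$ block ($i,j\in[p]$) is $A^{(((i-j)\bmod p)+1)}$. $\mathrm{unfold}(\mathcal{A})\in\mathbb{R}^{mp\times n}$ stacks $A^{(1)},\dots,A^{(p)}$ vertically, $\mathrm{fold}$ is its inverse (so a vector in $\mathbb{R}^{mp}$ is folded into an $m\times1\times p$ tensor whose $k$-th frontal slice is the $k$-th block of length $m$), and the T-product is $\mathcal{A}*\mathcal{B}=\mathrm{fold}(\mathrm{bcirc}(\mathcal{A})\,\mathrm{unfold}(\mathcal{B}))$. The transpose $\mathcal{A}^\top$ has frontal slices $(A^{(1)})^\top,(A^{(p)})^\top,\dots,(A^{(2)})^\top$; $S\mathbb{R}^{n\times n\times p}$ is the set of $\mathcal{A}\in\mathbb{R}^{n\times n\times p}$ with $\mathcal{A}^\top=\mathcal{A}$. The inner product is $\langle\mathcal{A},\mathcal{B}\rangle=\sum a_{ijk}b_{ijk}$,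 and $X\bullet Y=\sum_{ij}X_{ij}Y_{ij}$ for matrices. $S\mathbb{R}^{m\times m\times p}_+$ is the set of symmetric T-positive semidefinite tensors: $\mathcal{A}\in S\mathbb{R}^{m\times m\times p}$ with $\langle\mathcal{Z},\mathcal{A}*\mathcal{Z}\rangle\ge0$ for all $\mathcal{Z}\in\mathbb{R}^{m\times1\times p}$. $\mathbf{x}^\alpha=x_1^{\alpha_1}\cdots x_n^{\alpha_n}$, $|\alpha|=\sum\alpha_i$. *)

theory Defs
  imports Complex_Main "Jordan_Normal_Form.Matrix"
begin

definition multi_idx :: "nat \<Rightarrow> nat \<Rightarrow> (nat \<Rightarrow> nat) set" where
  "multi_idx n k = {\<alpha>. (\<forall>i\<ge>n. \<alpha> i = 0) \<and> (\<Sum>i<n. \<alpha> i) \<le> k}"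

definition absidx :: "nat \<Rightarrow> (nat \<Rightarrow> nat) \<Rightarrow> nat" where
  "absidx n \<alpha> = (\<Sum>i<n. \<alpha> i)"

definition monomial :: "nat \<Rightarrow> (nat \<Rightarrow> real) \<Rightarrow> (nat \<Rightarrow> nat) \<Rightarrow> real" where
  "monomial n x \<alpha> = (\<Prod>i<n. x i ^ \<alpha> i)"

text \<open>Polynomial with coefficient function c, evaluated at x in R^n (only x 0..x (n-1) matter).
  The constant term f_0 is c applied to the zero multi-index.\<close>
definition poly_eval :: "nat \<Rightarrow> nat \<Rightarrow> ((nat \<Rightarrow> nat) \<Rightarrow> real) \<Rightarrow> (nat \<Rightarrow> real) \<Rightarrow> real" where
  "poly_eval n k c x = (\<Sum>\<alpha>\<in>multi_idx n k. c \<alpha> * monomial n x \<alpha>)"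

definition monvec :: "nat \<Rightarrow> nat \<Rightarrow> (nat \<Rightarrow> (nat \<Rightarrow> nat)) \<Rightarrow> (nat \<Rightarrow> real) \<Rightarrow> real vec" where
  "monvec n N omon x = vec N (\<lambda>i. monomial n x (omon i))"

definition frob :: "real mat \<Rightarrow> real mat \<Rightarrow> real" (infixl "\<bullet>\<^sub>F" 70) where
  "frob X Y = (\<Sum>i<dim_row X. \<Sum>j<dim_col X. X $$ (i,j) * Y $$ (i,j))"

definition outer_self :: "real vec \<Rightarrow> real mat" where
  "outer_self v = mat (dim_vec v) (dim_vec v) (\<lambda>(i,j). v $ i * v $ j)"

definition psd_mat :: "nat \<Rightarrow> real mat \<Rightarrow> bool" where
  "psd_mat N X \<longleftrightarrow> X \<in> carrier_mat N N \<and> transpose_mat X = X \<and>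
     (\<forall>v \<in> carrier_vec N. v \<bullet> (X *\<^sub>v v) \<ge> 0)"

text \<open>A tensor in R^{m x n x p} is a function a i j k (0-based indices i<m, j<n, k<p);
  frontal slice k (0-based) is A^(k+1). Values outside the index range are irrelevant.\<close>
type_synonym tensor = "nat \<Rightarrow> nat \<Rightarrow> nat \<Rightarrow> real"

definition bcirc :: "nat \<Rightarrow> nat \<Rightarrow> nat \<Rightarrow> tensor \<Rightarrow> real mat" where
  "bcirc m n p A = mat (m*p) (n*p)
     (\<lambda>(r,c). A (r mod m) (c mod n) (nat ((int (r div m) - int (c div n)) mod int p)))"

definition tunfold :: "nat \<Rightarrow> nat \<Rightarrow> nat \<Rightarrow> tensor \<Rightarrow> real mat" where
  "tunfold m n p A = mat (m*p) n (\<lambda>(r,c). A (r mod m) c (r div m))"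

definition tfold :: "nat \<Rightarrow> real mat \<Rightarrow> tensor" where
  "tfold m M = (\<lambda>i j k. M $$ (k*m + i, j))"

definition tprod :: "nat \<Rightarrow> nat \<Rightarrow> nat \<Rightarrow> nat \<Rightarrow> tensor \<Rightarrow> tensor \<Rightarrow> tensor" where
  "tprod m n l p A B = tfold m (bcirc m n p A * tunfold n l p B)"

text \<open>Transpose: slices (A^(1))^T, (A^(p))^T, ..., (A^(2))^T.\<close>
definition ttrans :: "nat \<Rightarrow> tensor \<Rightarrow> tensor" where
  "ttrans p A = (\<lambda>i j k. A j i ((p - k) mod p))"

definition tinner :: "nat \<Rightarrow> nat \<Rightarrow> nat \<Rightarrow> tensor \<Rightarrow> tensor \<Rightarrow> real" where
  "tinner m n p A B = (\<Sum>i<m. \<Sum>j<n. \<Sum>k<p. A i j k * B i j k)"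

definition tsym :: "nat \<Rightarrow> nat \<Rightarrow> tensor \<Rightarrow> bool" where
  "tsym m p A \<longleftrightarrow> (\<forall>i<m. \<forall>j<m. \<forall>k<p. ttrans p A i j k = A i j k)"

definition tpsd :: "nat \<Rightarrow> nat \<Rightarrow> tensor \<Rightarrow> bool" where
  "tpsd m p A \<longleftrightarrow> tsym m p A \<and>
     (\<forall>Z :: tensor. tinner m 1 p Z (tprod m m 1 p A Z) \<ge> 0)"

definition col_of_vec :: "real vec \<Rightarrow> real mat" where
  "col_of_vec v = mat (dim_vec v) 1 (\<lambda>(i,j). v $ i)"

definition tfold_vec :: "nat \<Rightarrow> real vec \<Rightarrow> tensor" where
  "tfold_vec m v = tfold m (col_of_vec v)"

definition sdp_feasible :: "nat \<Rightarrow> nat \<Rightarrow> ((nat \<Rightarrow> nat) \<Rightarrow> real) \<Rightarrow> nat \<Rightarrow>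
    (nat \<Rightarrow> (nat \<Rightarrow> nat)) \<Rightarrow> real set" where
  "sdp_feasible n d c N omon = {\<gamma>. \<exists>X. psd_mat N X \<and>
     (\<forall>x. poly_eval n (2*d) c x - \<gamma> = X \<bullet>\<^sub>F outer_self (monvec n N omon x))}"

definition tsdp_feasible :: "nat \<Rightarrow> nat \<Rightarrow> ((nat \<Rightarrow> nat) \<Rightarrow> real) \<Rightarrow> nat \<Rightarrow>
    (nat \<Rightarrow> (nat \<Rightarrow> nat)) \<Rightarrow> nat \<Rightarrow> nat \<Rightarrow> real set" where
  "tsdp_feasible n d c N omon m p = {\<gamma>. \<exists>\<X>. tpsd m p \<X> \<and>
     (\<forall>x. poly_eval n (2*d) c x - \<gamma> =
        tinner m m p \<X> (tprod m 1 m p (tfold_vec m (monvec n N omon x))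
                                       (ttrans p (tfold_vec m (monvec n N omon x)))))}"

end

theory Submission
  imports Defs
begin

text \<open>Unfolding the T-product shows
  \<open>\<langle>\<X>, [\<X>]\<^sub>d * [\<X>]\<^sub>d\<^sup>T\<rangle> = bcirc(\<X>) \<bullet> [x]\<^sub>d [x]\<^sub>d\<^sup>T\<close>, and the T-quadratic form of \<open>\<X>\<close> is the
  ordinary quadratic form of \<open>bcirc(\<X>)\<close>, so \<open>\<X>\<close> is symmetric T-positive semidefinite
  exactly when \<open>bcirc(\<X>)\<close> is symmetric positive semidefinite. Hence the TSDP relaxation
  is the SDP relaxation restricted to \<open>p\<close>-block circulant matrices: its feasible set is
  smaller, giving the inequality, and the optimal values agree exactly when an optimal
  SDP matrix can be taken block circulant.\<close>

abbreviation mod_sub :: "nat \<Rightarrow> nat \<Rightarrow> nat \<Rightarrow> nat" where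
  "mod_sub p a b \<equiv> nat ((int a - int b) mod int p)"

lemma mod_sub_less: "0 < p \<Longrightarrow> mod_sub p a b < p"
  by (simp add: nat_less_iff)

lemma minus_mod_eq_mod_sub: "l < p \<Longrightarrow> (p - l) mod p = mod_sub p 0 l"
  by (cases "l = 0") (simp_all add: zmod_zminus1_eq_if of_nat_diff)

lemma mod_sub_mod_sub_neg:
  assumes "0 < p" "k < p" "l < p"
  shows "mod_sub p (mod_sub p k l) ((p - l) mod p) = k"
proof -
  have "((int k - int l) mod int p - (0 - int l) mod int p) mod int p = int k mod int p"
    by (simp add: mod_diff_eq)
  then show ?thesis using assms by (simp add: minus_mod_eq_mod_sub)
qed

lemma neg_neg_mod: "(l::nat) < p \<Longrightarrow> (p - (p - l) mod p) mod p = l"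
  by (cases "l = 0") (simp_all add: mod_if)

lemma neg_mod_sub: "0 < p \<Longrightarrow> (p - mod_sub p a b) mod p = mod_sub p b a"
proof -
  assume p: "0 < p"
  have "(0 - (int a - int b) mod int p) mod int p = (int b - int a) mod int p"
    by (metis diff_0 minus_diff_eq mod_minus_eq)
  then show ?thesis using p by (simp add: minus_mod_eq_mod_sub mod_sub_less)
qed

lemma block_index_less: "(k::nat) < p \<Longrightarrow> i < m \<Longrightarrow> k * m + i < m * p"
proof -
  assume "k < p" "i < m"
  then have "k * m + i < (k + 1) * m" by simp
  also have "\<dots> \<le> p * m" using \<open>k < p\<close> by (intro mult_right_mono) auto
  finally show ?thesis by (simp add: mult.commute)
qed

lemma sum_blocks:
  fixes m p :: nat assumes "0 < m"
  shows "(\<Sum>r<m * p. g r) = (\<Sum>k<p. \<Sum>i<m. g (k * m + i))"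
proof -
  have "(\<Sum>r<m * p. g r) = (\<Sum>(k, i)\<in>{..<p} \<times> {..<m}. g (k * m + i))"
    by (rule sum.reindex_bij_witness[where i = "\<lambda>(k, i). k * m + i" and j = "\<lambda>r. (r div m, r mod m)"])
       (use assms in \<open>auto simp: block_index_less less_mult_imp_div_less mult.commute\<close>)
  then show ?thesis by (simp add: sum.cartesian_product)
qed

text \<open>The substitution \<open>(k, l) \<mapsto> (k - l, -l)\<close> (mod \<open>p\<close>) is an involution of \<open>[p] \<times> [p]\<close>.\<close>
lemma sum_circulant_reindex:
  fixes p :: nat and g :: "nat \<Rightarrow> nat \<Rightarrow> real" assumes p: "0 < p"
  shows "(\<Sum>k<p. \<Sum>l<p. g k (mod_sub p k l) * h ((p - l) mod p))
       = (\<Sum>a<p. \<Sum>b<p. g (mod_sub p a b) a * h b)"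
proof -
  let ?\<phi> = "\<lambda>(k, l). (mod_sub p k l, (p - l) mod p)"
  have \<phi>_inv: "?\<phi> (?\<phi> kl) = kl" and \<phi>_range: "?\<phi> kl \<in> {..<p} \<times> {..<p}"
    if "kl \<in> {..<p} \<times> {..<p}" for kl
    using that mod_sub_mod_sub_neg[OF p] neg_neg_mod mod_sub_less[OF p] p by auto
  have "(\<Sum>(k, l)\<in>{..<p} \<times> {..<p}. g k (mod_sub p k l) * h ((p - l) mod p))
      = (\<Sum>(a, b)\<in>{..<p} \<times> {..<p}. g (mod_sub p a b) a * h b)"
    by (rule sum.reindex_bij_witness[where i = ?\<phi> and j = ?\<phi>])
       (use \<phi>_inv \<phi>_range in \<open>force+\<close>)
  then show ?thesis by (simp add: sum.cartesian_product)
qed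

lemma tfold_vec_nth: "k * m + i < dim_vec v \<Longrightarrow> tfold_vec m v i 0 k = v $ (k * m + i)"
  by (simp add: tfold_vec_def tfold_def col_of_vec_def)

lemma tprod_tfold_vec_ttrans:
  assumes v: "dim_vec v = m * p" and p: "0 < p" and ijk: "i < m" "j < m" "k < p"
  shows "tprod m 1 m p (tfold_vec m v) (ttrans p (tfold_vec m v)) i j k
     = (\<Sum>l<p. v $ (mod_sub p k l * m + i) * v $ ((p - l) mod p * m + j))"
proof -
  let ?F = "tfold_vec m v"
  have "tprod m 1 m p ?F (ttrans p ?F) i j k
      = (\<Sum>l<p. ?F i 0 (mod_sub p k l) * ?F j 0 ((p - l) mod p))"
    using ijk block_index_less[OF ijk(3,1)]
    by (simp add: tprod_def tfold_def bcirc_def tunfold_def ttrans_def scalar_prod_def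
        lessThan_atLeast0)
  also have "\<dots> = (\<Sum>l<p. v $ (mod_sub p k l * m + i) * v $ ((p - l) mod p * m + j))"
    using p ijk v
    by (intro sum.cong refl)
       (simp add: tfold_vec_nth block_index_less mod_sub_less)
  finally show ?thesis .
qed

theorem tinner_tprod_tfold_vec_eq_frob_bcirc:
  fixes X :: tensor
  assumes v: "dim_vec v = m * p" and m: "0 < m" and p: "0 < p"
  shows "tinner m m p X (tprod m 1 m p (tfold_vec m v) (ttrans p (tfold_vec m v)))
       = bcirc m m p X \<bullet>\<^sub>F outer_self v"
proof -
  let ?G = "\<lambda>i j a b. X i j (mod_sub p a b) * v $ (a * m + i) * v $ (b * m + j)"
  have "tinner m m p X (tprod m 1 m p (tfold_vec m v) (ttrans p (tfold_vec m v)))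
      = (\<Sum>i<m. \<Sum>j<m. \<Sum>k<p. \<Sum>l<p.
           X i j k * v $ (mod_sub p k l * m + i) * v $ ((p - l) mod p * m + j))"
    unfolding tinner_def using v p
    by (intro sum.cong refl)
       (simp add: tprod_tfold_vec_ttrans sum_distrib_left mult.assoc del: One_nat_def)
  also have "\<dots> = (\<Sum>i<m. \<Sum>j<m. \<Sum>a<p. \<Sum>b<p. ?G i j a b)"
    by (intro sum.cong refl sum_circulant_reindex[OF p])
  also have "\<dots> = (\<Sum>i<m. \<Sum>a<p. \<Sum>j<m. \<Sum>b<p. ?G i j a b)"
    by (intro sum.cong refl sum.swap)
  also have "\<dots> = (\<Sum>a<p. \<Sum>i<m. \<Sum>b<p. \<Sum>j<m. ?G i j a b)"
    by (subst sum.swap) (intro sum.cong refl sum.swap)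
  also have "\<dots> = (\<Sum>r<m * p. \<Sum>c<m * p.
                    X (r mod m) (c mod m) (mod_sub p (r div m) (c div m)) * v $ r * v $ c)"
    using m by (simp add: sum_blocks)
  also have "\<dots> = bcirc m m p X \<bullet>\<^sub>F outer_self v"
    unfolding frob_def by (intro sum.cong) (auto simp: bcirc_def outer_self_def v)
  finally show ?thesis .
qed

definition unfold_vec :: "nat \<Rightarrow> nat \<Rightarrow> tensor \<Rightarrow> real vec" where
  "unfold_vec m p Z = vec (m * p) (\<lambda>r. Z (r mod m) 0 (r div m))"

lemma tinner_tprod_eq_quadratic_form:
  fixes Y Z :: tensor assumes m: "0 < m"
  shows "tinner m 1 p Z (tprod m m 1 p Y Z)
       = unfold_vec m p Z \<bullet> (bcirc m m p Y *\<^sub>v unfold_vec m p Z)"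
proof -
  let ?u = "unfold_vec m p Z" and ?B = "bcirc m m p Y"
  have entry: "tprod m m 1 p Y Z i 0 k = (?B *\<^sub>v ?u) $ (k * m + i)" if "i < m" "k < p" for i k
  proof -
    have "col (tunfold m 1 p Z) 0 = ?u"
      by (simp add: tunfold_def unfold_vec_def)
    then show ?thesis
      using block_index_less[OF that(2,1)] by (simp add: tprod_def tfold_def bcirc_def tunfold_def)
  qed
  have "tinner m 1 p Z (tprod m m 1 p Y Z) = (\<Sum>i<m. \<Sum>k<p. Z i 0 k * tprod m m 1 p Y Z i 0 k)"
    by (simp add: tinner_def)
  also have "\<dots> = (\<Sum>k<p. \<Sum>i<m. ?u $ (k * m + i) * (?B *\<^sub>v ?u) $ (k * m + i))"
    by (subst sum.swap, intro sum.cong refl)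
       (simp add: entry block_index_less unfold_vec_def del: One_nat_def)
  also have "\<dots> = (\<Sum>r<m * p. ?u $ r * (?B *\<^sub>v ?u) $ r)"
    by (simp add: sum_blocks[OF m])
  also have "\<dots> = ?u \<bullet> (?B *\<^sub>v ?u)"
    by (simp add: scalar_prod_def unfold_vec_def bcirc_def lessThan_atLeast0)
  finally show ?thesis .
qed

lemma range_unfold_vec: "range (unfold_vec m p) = carrier_vec (m * p)"
proof (intro equalityI subsetI)
  fix u :: "real vec" assume "u \<in> carrier_vec (m * p)"
  then have "u = unfold_vec m p (\<lambda>i j k. u $ (k * m + i))"
    by (intro eq_vecI) (auto simp: unfold_vec_def)
  then show "u \<in> range (unfold_vec m p)" by blast
qed (auto simp: unfold_vec_def)

lemma tsym_iff_symmetric_bcirc: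
  assumes m: "0 < m" and p: "0 < p"
  shows "tsym m p Y \<longleftrightarrow> transpose_mat (bcirc m m p Y) = bcirc m m p Y"
proof
  assume sym: "tsym m p Y"
  show "transpose_mat (bcirc m m p Y) = bcirc m m p Y"
  proof (rule eq_matI)
    fix r c assume "r < dim_row (bcirc m m p Y)" "c < dim_col (bcirc m m p Y)"
    then have rc: "r < m * p" "c < m * p" by (auto simp: bcirc_def)
    have "ttrans p Y (r mod m) (c mod m) (mod_sub p (r div m) (c div m))
        = Y (r mod m) (c mod m) (mod_sub p (r div m) (c div m))"
      using sym m mod_sub_less[OF p] unfolding tsym_def by simp
    then have "Y (c mod m) (r mod m) (mod_sub p (c div m) (r div m))
        = Y (r mod m) (c mod m) (mod_sub p (r div m) (c div m))"
      by (simp add: ttrans_def neg_mod_sub[OF p])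
    then show "transpose_mat (bcirc m m p Y) $$ (r, c) = bcirc m m p Y $$ (r, c)"
      using rc by (simp add: bcirc_def)
  qed (auto simp: bcirc_def)
next
  assume tr: "transpose_mat (bcirc m m p Y) = bcirc m m p Y"
  show "tsym m p Y" unfolding tsym_def
  proof (intro allI impI)
    fix i j k assume ijk: "i < m" "j < m" "k < p"
    have "j < m * p" using ijk p by (metis block_index_less mult_zero_left add_0)
    then have "transpose_mat (bcirc m m p Y) $$ (k * m + i, j) = bcirc m m p Y $$ (k * m + i, j)"
      using tr by simp
    then show "ttrans p Y i j k = Y i j k"
      using ijk block_index_less[OF ijk(3,1)] \<open>j < m * p\<close>
      by (simp add: bcirc_def ttrans_def minus_mod_eq_mod_sub)
  qed
qed

theorem tpsd_iff_psd_bcirc: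
  assumes m: "0 < m" and p: "0 < p"
  shows "tpsd m p Y \<longleftrightarrow> psd_mat (m * p) (bcirc m m p Y)"
proof -
  have "(\<forall>Z. 0 \<le> unfold_vec m p Z \<bullet> (bcirc m m p Y *\<^sub>v unfold_vec m p Z))
      \<longleftrightarrow> (\<forall>u \<in> range (unfold_vec m p). 0 \<le> u \<bullet> (bcirc m m p Y *\<^sub>v u))"
    by blast
  then show ?thesis
    unfolding tpsd_def psd_mat_def tsym_iff_symmetric_bcirc[OF m p]
      tinner_tprod_eq_quadratic_form[OF m] range_unfold_vec
    by (auto simp: bcirc_def)
qed

lemma cSup_subset_eq_iff_mem:
  fixes S T :: "'a :: conditionally_complete_lattice set"
  assumes "T \<subseteq> S" "bdd_above S" "Sup T \<in> T"
  shows "Sup T = Sup S \<longleftrightarrow> Sup S \<in> T"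
proof
  assume "Sup S \<in> T"
  then have "Sup S \<le> Sup T" using assms by (meson bdd_above_mono cSup_upper)
  moreover have "Sup T \<le> Sup S" using assms by (intro cSup_subset_mono) auto
  ultimately show "Sup T = Sup S" by simp
qed (use assms in simp)

lemma tsdp_feasible_eq_block_circulant_sdp:
  assumes "N = m * p" "0 < m" "0 < p"
  shows "tsdp_feasible n d c N omon m p = {\<gamma>. \<exists>\<Y>. psd_mat N (bcirc m m p \<Y>) \<and>
           (\<forall>x. poly_eval n (2*d) c x - \<gamma> = bcirc m m p \<Y> \<bullet>\<^sub>F outer_self (monvec n N omon x))}"
proof -
  have "dim_vec (monvec n N omon x) = m * p" for x
    using assms by (simp add: monvec_def)
  then show ?thesis
    using assms unfolding tsdp_feasible_def
    by (simp add: tpsd_iff_psd_bcirc tinner_tprod_tfold_vec_eq_frob_bcirc del: One_nat_def)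
qed

theorem mainTheorem17:
  fixes n d m p N :: nat
    and c :: "(nat \<Rightarrow> nat) \<Rightarrow> real"
    and omon :: "nat \<Rightarrow> (nat \<Rightarrow> nat)"
  assumes deg: "\<exists>\<alpha>\<in>multi_idx n (2*d). absidx n \<alpha> = 2*d \<and> c \<alpha> \<noteq> 0"
    and N_def: "N = (n + d) choose d"
    and mon_bij: "bij_betw omon {0..<N} (multi_idx n d)"
    and mon_first: "omon 0 = (\<lambda>_. 0)"
    and Nmp: "N = m * p" and m_pos: "m \<ge> 1" and p_ne1: "p \<noteq> 1"
    and sdp_ne: "sdp_feasible n d c N omon \<noteq> {}"
    and sdp_bdd: "bdd_above (sdp_feasible n d c N omon)"
    and sdp_att: "Sup (sdp_feasible n d c N omon) \<in> sdp_feasible n d c N omon"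
    and tsdp_ne: "tsdp_feasible n d c N omon m p \<noteq> {}"
    and tsdp_bdd: "bdd_above (tsdp_feasible n d c N omon m p)"
    and tsdp_att: "Sup (tsdp_feasible n d c N omon m p) \<in> tsdp_feasible n d c N omon m p"
  shows "c (\<lambda>_. 0) - Sup (sdp_feasible n d c N omon)
           \<le> c (\<lambda>_. 0) - Sup (tsdp_feasible n d c N omon m p)
       \<and> (c (\<lambda>_. 0) - Sup (sdp_feasible n d c N omon)
             = c (\<lambda>_. 0) - Sup (tsdp_feasible n d c N omon m p)
          \<longleftrightarrow> (\<exists>Xs. psd_mat N Xs
                 \<and> (\<forall>x. poly_eval n (2*d) c x - Sup (sdp_feasible n d c N omon)
                        = Xs \<bullet>\<^sub>F outer_self (monvec n N omon x))
                 \<and> (\<exists>\<Y>::tensor. Xs = bcirc m m p \<Y>)))"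
proof -
  let ?S = "sdp_feasible n d c N omon" and ?T = "tsdp_feasible n d c N omon m p"
  have "0 < p" using Nmp N_def by (cases p) auto
  then have T_eq: "?T = {\<gamma>. \<exists>\<Y>. psd_mat N (bcirc m m p \<Y>) \<and>
           (\<forall>x. poly_eval n (2*d) c x - \<gamma> = bcirc m m p \<Y> \<bullet>\<^sub>F outer_self (monvec n N omon x))}"
    using Nmp m_pos by (simp add: tsdp_feasible_eq_block_circulant_sdp)
  then have "?T \<subseteq> ?S" unfolding sdp_feasible_def by blast
  then have "Sup ?T \<le> Sup ?S" and "Sup ?T = Sup ?S \<longleftrightarrow> Sup ?S \<in> ?T"
    using cSup_subset_mono[OF tsdp_ne sdp_bdd] cSup_subset_eq_iff_mem[OF _ sdp_bdd tsdp_att]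
    by auto
  then show ?thesis unfolding T_eq by auto
qed

end
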